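(* Let $m,k$ be positive integers, let $A$ be the set of nonempty $k$-ary words that cyclically avoid the pattern $1^m$, and let $w(a_1\cdots a_l)=x_{a_1}x_{a_2}\cdots x_{a_l}$. Then \[ \sum_{W\in A}w(W)=\sum_{i=1}^k\frac{x_i^{2m}-mx_i^{m+1}+(m-1)x_i^m}{(x_i^m-1)(x_i-1)}+\frac{\sum_{i=1}^k\frac{(m-1)x_i^{m+1}-mx_i^m+x_i}{(x_i^m-1)^2}}{1-\sum_{i=1}^k\frac{x_i^m-x_i}{x_i^m-1}}. \]
   Context: A $k$-ary word is a finite sequence of letters from $\{1,\ldots,k\}$. A word contains the pattern $1^m$ if it has $m$ consecutive equal letters, and avoids it otherwise. With $r(a_1\cdots a_l)=a_la_1\cdots a_{l-1}$, a word $W$ cyclically avoids $1^m$ if $r^j(W)$ avoids $1^m$ for every $j$. *)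

theory Defs
  imports "HOL-Analysis.Analysis"
begin

text \<open>Words are lists of letters (natural numbers); a k-ary word has all letters in {1..k}.\<close>

definition contains_run :: "nat \<Rightarrow> nat list \<Rightarrow> bool" where
  "contains_run m W \<longleftrightarrow> (\<exists>i. i + m \<le> length W \<and> (\<forall>j<m. W ! (i + j) = W ! i))"

definition avoids_run :: "nat \<Rightarrow> nat list \<Rightarrow> bool" where
  "avoids_run m W \<longleftrightarrow> \<not> contains_run m W"

definition rot_r :: "'a list \<Rightarrow> 'a list" where
  "rot_r W = (if W = [] then [] else last W # butlast W)"

definition cyc_avoids_run :: "nat \<Rightarrow> nat list \<Rightarrow> bool" where
  "cyc_avoids_run m W \<longleftrightarrow> (\<forall>j. avoids_run m ((rot_r ^^ j) W))"

definition word_weight :: "(nat \<Rightarrow> complex) \<Rightarrow> nat list \<Rightarrow> complex" where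
  "word_weight x W = prod_list (map x W)"

end

theory Submission
  imports Defs
begin

text \<open>
  For linear (non-cyclic) avoiders let \<open>L\<close> be their total weight, \<open>P\<^sub>a\<close> that of the ones
  ending with \<open>a\<close>, and \<open>y\<^sub>a = \<Sum>\<^sub>r\<^sub>=\<^sub>1\<^sup>m\<^sup>-\<^sup>1 x\<^sub>a\<^sup>r\<close> the weight of a nonempty run of \<open>a\<close> shorter than \<open>m\<close>.
  Stripping the final run gives \<open>P\<^sub>a = y\<^sub>a (L - P\<^sub>a)\<close> and \<open>L = 1 + \<Sum>\<^sub>a P\<^sub>a\<close>. Reversal turns the
  words not ending with \<open>a\<close> into those not starting with \<open>a\<close>; splitting off a final run of \<open>a\<close>
  from these gives \<open>L - P\<^sub>a = 1 + (1 + y\<^sub>a) M\<^sub>a\<close>, where \<open>M\<^sub>a\<close> is the weight of the avoiders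
  neither starting nor ending with \<open>a\<close>. A cyclic avoider starting with \<open>a\<close> is either \<open>a\<^sup>l\<close>
  with \<open>l < m\<close>, or \<open>a\<^sup>p V a\<^sup>q\<close> with \<open>p \<ge> 1\<close>, \<open>p + q < m\<close> and \<open>V\<close> counted by \<open>M\<^sub>a\<close>; hence these
  weigh \<open>y\<^sub>a + c\<^sub>a M\<^sub>a\<close> with \<open>c\<^sub>a = \<Sum>\<^sub>s\<^sub>=\<^sub>1\<^sup>m\<^sup>-\<^sup>1 s x\<^sub>a\<^sup>s\<close>. Solving the linear system for \<open>M\<^sub>a\<close> and
  summing the geometric series \<open>y\<^sub>a\<close>, \<open>c\<^sub>a\<close> in closed form gives the formula; the hypothesis on
  the norms makes all these weight series absolutely summable.
\<close>

section \<open>Runs in words\<close>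

lemma contains_run_prefix: "contains_run m A \<Longrightarrow> contains_run m (A @ B)"
  unfolding contains_run_def
proof (elim exE conjE)
  fix i assume "i + m \<le> length A" "\<forall>j<m. A ! (i + j) = A ! i"
  then show "\<exists>i. i + m \<le> length (A @ B) \<and> (\<forall>j<m. (A @ B) ! (i + j) = (A @ B) ! i)"
    by (intro exI[of _ i]) (auto simp: nth_append)
qed

lemma contains_run_suffix: "contains_run m B \<Longrightarrow> contains_run m (A @ B)"
  unfolding contains_run_def
proof (elim exE conjE)
  fix i assume "i + m \<le> length B" "\<forall>j<m. B ! (i + j) = B ! i"
  then show "\<exists>i. i + m \<le> length (A @ B) \<and> (\<forall>j<m. (A @ B) ! (i + j) = (A @ B) ! i)"
    by (intro exI[of _ "length A + i"]) (auto simp: nth_append add.assoc)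
qed

text \<open>A run of \<open>A @ B\<close> lying in neither factor crosses the junction, so it contains
  both \<open>last A\<close> and \<open>hd B\<close>.\<close>
lemma contains_run_append_iff:
  assumes "A = [] \<or> B = [] \<or> last A \<noteq> hd B"
  shows "contains_run m (A @ B) \<longleftrightarrow> contains_run m A \<or> contains_run m B"
proof
  assume "contains_run m (A @ B)"
  then obtain i where i: "i + m \<le> length (A @ B)" and run: "\<forall>j<m. (A @ B) ! (i + j) = (A @ B) ! i"
    unfolding contains_run_def by blast
  consider "i + m \<le> length A" | "length A \<le> i" | "i < length A" "length A < i + m" by linarith
  then show "contains_run m A \<or> contains_run m B"
  proof cases
    case 1
    then have "contains_run m A"
      unfolding contains_run_def using run by (intro exI[of _ i]) (auto simp: nth_append)
    then show ?thesis ..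
  next
    case 2
    have "contains_run m B" unfolding contains_run_def
    proof (intro exI[of _ "i - length A"] conjI allI impI)
      show "i - length A + m \<le> length B" using i 2 by simp
      fix j assume "j < m"
      then show "B ! (i - length A + j) = B ! (i - length A)"
        using run 2 by (auto simp: nth_append)
    qed
    then show ?thesis ..
  next
    case 3
    then have "A \<noteq> []" "B \<noteq> []" using i by auto
    have "length A - 1 - i < m" "length A - i < m" using 3 by auto
    moreover have "(A @ B) ! (i + (length A - 1 - i)) = last A"
      using 3 \<open>A \<noteq> []\<close> by (simp add: nth_append last_conv_nth)
    moreover have "(A @ B) ! (i + (length A - i)) = hd B"
      using 3 \<open>B \<noteq> []\<close> by (simp add: nth_append hd_conv_nth)
    ultimately have "last A = hd B" using run by metis
    with assms \<open>A \<noteq> []\<close> \<open>B \<noteq> []\<close> show ?thesis by simp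
  qed
qed (use contains_run_prefix contains_run_suffix in blast)

lemma not_contains_run_short: "length W < m \<Longrightarrow> \<not> contains_run m W"
  unfolding contains_run_def by auto

lemma contains_run_replicate: "contains_run m (replicate l a) \<longleftrightarrow> m \<le> l"
  unfolding contains_run_def by (auto intro!: exI[of _ 0])

lemma contains_run_append_replicate:
  "V = [] \<or> last V \<noteq> a \<Longrightarrow> contains_run m (V @ replicate r a) \<longleftrightarrow> contains_run m V \<or> m \<le> r"
  by (subst contains_run_append_iff) (auto simp: contains_run_replicate)

lemma contains_run_rev_imp:
  assumes "contains_run m V" shows "contains_run m (rev V)"
proof -
  obtain i where i: "i + m \<le> length V" and run: "\<forall>j<m. V ! (i + j) = V ! i"
    using assms unfolding contains_run_def by blast
  define i' where "i' = length V - m - i"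
  have mirror: "rev V ! (i' + j) = V ! i" if "j < m" for j
  proof -
    have "rev V ! (i' + j) = V ! (length V - Suc (i' + j))"
      using that i by (simp add: rev_nth i'_def)
    also have "length V - Suc (i' + j) = i + (m - 1 - j)" using that i by (simp add: i'_def)
    also have "V ! \<dots> = V ! i" using that by (intro run[rule_format]) simp
    finally show ?thesis .
  qed
  show ?thesis unfolding contains_run_def
  proof (intro exI[of _ i'] conjI allI impI)
    show "i' + m \<le> length (rev V)" using i by (simp add: i'_def)
    fix j assume "j < m"
    then show "rev V ! (i' + j) = rev V ! i'" using mirror[of j] mirror[of 0] by simp
  qed
qed

lemma contains_run_rev [simp]: "contains_run m (rev V) \<longleftrightarrow> contains_run m V"
  using contains_run_rev_imp[of m V] contains_run_rev_imp[of m "rev V"] by auto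

section \<open>Cyclic avoidance\<close>

lemma rot_r_eq_rotate: "rot_r V = rotate (length V - 1) V"
proof (cases V rule: rev_exhaust)
  case (snoc xs y)
  then show ?thesis by (simp add: rot_r_def rotate_drop_take)
qed (simp add: rot_r_def)

lemma funpow_rot_r: "(rot_r ^^ j) W = rotate (j * (length W - 1)) W"
proof (induction j)
  case (Suc j)
  then show ?case by (simp add: rot_r_eq_rotate rotate_rotate add.commute)
qed simp

text \<open>Since \<open>t \<equiv> -1 (mod t + 1)\<close>, every rotation of a word of length \<open>t + 1\<close> is
  a power of \<open>rot_r\<close>.\<close>
lemma mult_square_mod_Suc: "(j * t * t) mod Suc t = j mod Suc t"
proof (cases t)
  case (Suc u)
  then have "j * t * t = j + (j * u) * Suc t" by (simp add: algebra_simps)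
  then show ?thesis by (metis mod_mult_self1)
qed simp

lemma cyc_avoids_run_iff_rotate: "cyc_avoids_run m W \<longleftrightarrow> (\<forall>j. \<not> contains_run m (rotate j W))"
proof
  assume cyc: "cyc_avoids_run m W"
  show "\<forall>j. \<not> contains_run m (rotate j W)"
  proof (cases "W = []")
    case True
    then show ?thesis
      using cyc[unfolded cyc_avoids_run_def avoids_run_def, rule_format, of 0] by simp
  next
    case False
    then obtain t where t: "length W = Suc t" by (cases W) auto
    have "rotate j W = (rot_r ^^ (j * t)) W" for j
    proof -
      have "rotate j W = rotate (j * t * t) W" by (metis mult_square_mod_Suc rotate_conv_mod t)
      then show ?thesis by (simp add: funpow_rot_r t)
    qed
    then show ?thesis using cyc by (simp add: cyc_avoids_run_def avoids_run_def)
  qed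
qed (simp add: cyc_avoids_run_def avoids_run_def funpow_rot_r)

lemma contains_run_rotate_imp_double:
  "contains_run m (rotate j W) \<Longrightarrow> contains_run m (W @ W)"
proof -
  have "W @ W = take (j mod length W) W @ rotate j W @ drop (j mod length W) W"
    by (simp add: rotate_drop_take)
  then show "contains_run m (rotate j W) \<Longrightarrow> contains_run m (W @ W)"
    using contains_run_prefix contains_run_suffix by metis
qed

text \<open>A run of \<open>W @ W\<close> of length at most \<open>length W\<close> either lies in the second copy
  or starts in the first one, and then lies in the factor \<open>rotate i W\<close> of \<open>W @ W\<close>.\<close>
lemma contains_run_double_imp_rotate:
  assumes m: "m \<le> length W" and "contains_run m (W @ W)"
  shows "\<exists>j. contains_run m (rotate j W)"
proof -
  obtain i where i: "i + m \<le> length (W @ W)" and run: "\<forall>j<m. (W @ W) ! (i + j) = (W @ W) ! i"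
    using assms(2) unfolding contains_run_def by blast
  show ?thesis
  proof (cases "i < length W")
    case True
    have "W @ W = take i W @ rotate i W @ drop i W"
      using True by (simp add: rotate_drop_take)
    then have shift: "(W @ W) ! (i + j) = rotate i W ! j" if "j < length W" for j
      using True that by (simp add: nth_append)
    have "contains_run m (rotate i W)" unfolding contains_run_def
    proof (intro exI[of _ 0] conjI allI impI)
      fix j assume "j < m"
      then have "j < length W" "0 < length W" using m by auto
      then show "rotate i W ! (0 + j) = rotate i W ! 0"
        using run[rule_format, OF \<open>j < m\<close>] shift[of j] shift[of 0] by simp
    qed (use m in simp)
    then show ?thesis ..
  next
    case False
    have "contains_run m (rotate 0 W)" unfolding contains_run_def
    proof (intro exI[of _ "i - length W"] conjI allI impI)
      show "i - length W + m \<le> length (rotate 0 W)" using i False by simp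
      fix j assume "j < m"
      then show "rotate 0 W ! (i - length W + j) = rotate 0 W ! (i - length W)"
        using run False by (auto simp: nth_append)
    qed
    then show ?thesis ..
  qed
qed

lemma cyc_avoids_run_iff_double:
  "cyc_avoids_run m W \<longleftrightarrow> length W < m \<or> \<not> contains_run m (W @ W)"
  unfolding cyc_avoids_run_iff_rotate
proof
  show "length W < m \<or> \<not> contains_run m (W @ W)" if "\<forall>j. \<not> contains_run m (rotate j W)"
    using that contains_run_double_imp_rotate[of m W] by (auto simp: not_less)
  show "\<forall>j. \<not> contains_run m (rotate j W)" if "length W < m \<or> \<not> contains_run m (W @ W)"
    using that contains_run_rotate_imp_double by (auto simp: not_contains_run_short)
qed

lemma split_leading_run:
  obtains p V where "W = replicate p a @ V" "V = [] \<or> hd V \<noteq> a"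
proof
  have "takeWhile (\<lambda>c. c = a) W = replicate (length (takeWhile (\<lambda>c. c = a) W)) a"
    by (metis (mono_tags) replicate_length_same set_takeWhileD)
  then show "W = replicate (length (takeWhile (\<lambda>c. c = a) W)) a @ dropWhile (\<lambda>c. c = a) W"
    by (metis takeWhile_dropWhile_id)
  show "dropWhile (\<lambda>c. c = a) W = [] \<or> hd (dropWhile (\<lambda>c. c = a) W) \<noteq> a"
    using hd_dropWhile by blast
qed

lemma split_trailing_run:
  obtains V q where "W = V @ replicate q a" "V = [] \<or> last V \<noteq> a"
proof -
  obtain q U where W: "rev W = replicate q a @ U" and U: "U = [] \<or> hd U \<noteq> a"
    by (rule split_leading_run)
  show thesis
  proof (rule that)
    show "W = rev U @ replicate q a" using W by (metis rev_append rev_replicate rev_rev_ident)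
    show "rev U = [] \<or> last (rev U) \<noteq> a" using U by (auto simp: last_rev)
  qed
qed

lemma takeWhile_replicate_append:
  "V = [] \<or> hd V \<noteq> a \<Longrightarrow> takeWhile (\<lambda>c. c = a) (replicate p a @ V) = replicate p a"
  by (induction p) (cases V, auto)+

lemma leading_run_unique:
  assumes "replicate p a @ V = replicate p' a @ V'"
    and "V = [] \<or> hd V \<noteq> a" and "V' = [] \<or> hd V' \<noteq> a"
  shows "p = p' \<and> V = V'"
proof -
  have "replicate p a = replicate p' a"
    using assms takeWhile_replicate_append by metis
  then show ?thesis using assms(1) by (metis length_replicate same_append_eq)
qed

lemma trailing_run_unique:
  assumes "V @ replicate q a = V' @ replicate q' a"
    and "V = [] \<or> last V \<noteq> a" and "V' = [] \<or> last V' \<noteq> a"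
  shows "q = q' \<and> V = V'"
proof -
  have "replicate q a @ rev V = replicate q' a @ rev V'"
    using arg_cong[OF assms(1), of rev] by simp
  then show ?thesis
    using leading_run_unique[of q a "rev V" q' "rev V'"] assms(2,3) by (auto simp: hd_rev)
qed

lemma cyc_avoids_run_replicate: "l \<ge> 1 \<Longrightarrow> cyc_avoids_run m (replicate l a) \<longleftrightarrow> l < m"
  by (auto simp: cyc_avoids_run_iff_double contains_run_replicate replicate_add[symmetric])

text \<open>A word \<open>a\<^sup>p V a\<^sup>q\<close> with \<open>V\<close> neither starting nor ending with \<open>a\<close>: in the square
  \<open>a\<^sup>p V a\<^sup>q\<^sup>+\<^sup>p V a\<^sup>q\<close> the only runs not inside a copy of \<open>V\<close> are the blocks of \<open>a\<close>.\<close>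
lemma cyc_avoids_run_wrap:
  assumes p: "p \<ge> 1" and V: "V \<noteq> []" "hd V \<noteq> a" "last V \<noteq> a"
  shows "cyc_avoids_run m (replicate p a @ V @ replicate q a) \<longleftrightarrow> p + q < m \<and> \<not> contains_run m V"
proof -
  let ?W = "replicate p a @ V @ replicate q a"
  have square: "?W @ ?W = replicate p a @ (V @ (replicate (q + p) a @ (V @ replicate q a)))"
    by (simp add: replicate_add)
  have "contains_run m (?W @ ?W) \<longleftrightarrow> m \<le> p \<or> contains_run m V \<or> m \<le> q + p \<or> m \<le> q"
    unfolding square using V p
    by (simp add: contains_run_append_iff contains_run_replicate contains_run_append_replicate) blast
  then show ?thesis
    by (auto simp: cyc_avoids_run_iff_double not_contains_run_short)
qed

section \<open>Classes of avoiders\<close>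

definition avoiders :: "nat \<Rightarrow> nat \<Rightarrow> nat list set" where
  "avoiders m k = {V. set V \<subseteq> {1..k} \<and> \<not> contains_run m V}"

definition ending_with :: "nat \<Rightarrow> nat \<Rightarrow> nat \<Rightarrow> nat list set" where
  "ending_with m k a = {V \<in> avoiders m k. V \<noteq> [] \<and> last V = a}"

definition not_ending_with :: "nat \<Rightarrow> nat \<Rightarrow> nat \<Rightarrow> nat list set" where
  "not_ending_with m k a = {V \<in> avoiders m k. V = [] \<or> last V \<noteq> a}"

definition not_starting_with :: "nat \<Rightarrow> nat \<Rightarrow> nat \<Rightarrow> nat list set" where
  "not_starting_with m k a = {V \<in> avoiders m k. V = [] \<or> hd V \<noteq> a}"

definition unbordered :: "nat \<Rightarrow> nat \<Rightarrow> nat \<Rightarrow> nat list set" where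
  "unbordered m k a = {V \<in> avoiders m k. V \<noteq> [] \<and> hd V \<noteq> a \<and> last V \<noteq> a}"

definition cyc_avoiders :: "nat \<Rightarrow> nat \<Rightarrow> nat list set" where
  "cyc_avoiders m k = {W. W \<noteq> [] \<and> set W \<subseteq> {1..k} \<and> cyc_avoids_run m W}"

definition append_run :: "nat \<Rightarrow> nat \<times> nat list \<Rightarrow> nat list" where
  "append_run a = (\<lambda>(r, V). V @ replicate r a)"

text \<open>A non-constant cyclic word starting with \<open>a\<close> is \<open>a\<^sup>p V a\<^sup>s\<^sup>-\<^sup>p\<close> with \<open>1 \<le> p \<le> s\<close>,
  where \<open>s\<close> is the length of the cyclic run of \<open>a\<close> through the first position.\<close>
definition wrap_run :: "nat \<Rightarrow> (nat \<times> nat) \<times> nat list \<Rightarrow> nat list" where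
  "wrap_run a = (\<lambda>((s, p), V). replicate p a @ V @ replicate (s - p) a)"

definition run_splits :: "nat \<Rightarrow> (nat \<times> nat) set" where
  "run_splits m = Sigma {1..<m} (\<lambda>s. {1..s})"

lemma Nil_in_avoiders: "m \<ge> 1 \<Longrightarrow> [] \<in> avoiders m k"
  by (simp add: avoiders_def not_contains_run_short)

lemma avoiders_eq_Un_ending_with:
  assumes "m \<ge> 1"
  shows "avoiders m k = insert [] (\<Union>a\<in>{1..k}. ending_with m k a)"
proof -
  have "last V \<in> {1..k}" if "V \<in> avoiders m k" "V \<noteq> []" for V
    using that last_in_set[of V] by (auto simp: avoiders_def simp del: last_in_set)
  then show ?thesis using Nil_in_avoiders[OF assms] by (auto simp: ending_with_def) blast+
qed

lemma inj_on_append_run: "inj_on (append_run a) ({1..<m} \<times> not_ending_with m k a)"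
  by (rule inj_onI) (auto simp: append_run_def not_ending_with_def dest: trailing_run_unique)

lemma ending_with_eq_image:
  assumes a: "a \<in> {1..k}"
  shows "ending_with m k a = append_run a ` ({1..<m} \<times> not_ending_with m k a)"
proof (intro equalityI subsetI)
  fix W assume W: "W \<in> ending_with m k a"
  obtain V r where WV: "W = V @ replicate r a" and V: "V = [] \<or> last V \<noteq> a"
    by (rule split_trailing_run)
  have "r \<noteq> 0"
  proof
    assume "r = 0"
    then show False using W V WV by (auto simp: ending_with_def)
  qed
  moreover have "r < m" "V \<in> not_ending_with m k a"
    using W V WV contains_run_append_replicate[OF V, of m r]
    by (auto simp: ending_with_def not_ending_with_def avoiders_def)
  ultimately show "W \<in> append_run a ` ({1..<m} \<times> not_ending_with m k a)"
    using WV by (auto simp: append_run_def)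
next
  fix W assume "W \<in> append_run a ` ({1..<m} \<times> not_ending_with m k a)"
  then obtain r V where "1 \<le> r" "r < m" "V \<in> not_ending_with m k a" "W = V @ replicate r a"
    by (auto simp: append_run_def)
  then show "W \<in> ending_with m k a"
    using a contains_run_append_replicate[of V a m r]
    by (auto simp: ending_with_def not_ending_with_def avoiders_def)
qed

lemma bij_betw_rev_not_ending_with:
  "bij_betw rev (not_ending_with m k a) (not_starting_with m k a)"
proof (rule bij_betw_imageI)
  show "rev ` not_ending_with m k a = not_starting_with m k a"
  proof (intro equalityI subsetI)
    fix V assume "V \<in> not_starting_with m k a"
    then have "rev V \<in> not_ending_with m k a"
      by (auto simp: not_ending_with_def not_starting_with_def avoiders_def last_rev)
    then show "V \<in> rev ` not_ending_with m k a" by (rule image_eqI[rotated]) simp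
  qed (auto simp: not_ending_with_def not_starting_with_def avoiders_def hd_rev)
qed simp

lemma not_starting_with_eq:
  assumes "m \<ge> 1" and a: "a \<in> {1..k}"
  shows "not_starting_with m k a
           = insert [] (unbordered m k a \<union> append_run a ` ({1..<m} \<times> unbordered m k a))"
proof (intro equalityI subsetI)
  fix V assume V: "V \<in> not_starting_with m k a"
  show "V \<in> insert [] (unbordered m k a \<union> append_run a ` ({1..<m} \<times> unbordered m k a))"
  proof (cases "V \<noteq> [] \<and> last V = a")
    case True
    then have "V \<in> ending_with m k a" using V by (simp add: ending_with_def not_starting_with_def)
    then obtain r U where r: "r \<in> {1..<m}" and U: "U \<in> not_ending_with m k a"
      and VU: "V = U @ replicate r a"
      unfolding ending_with_eq_image[OF a] by (auto simp: append_run_def)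
    have "U \<noteq> []" using V VU r by (auto simp: not_starting_with_def)
    then have "U \<in> unbordered m k a"
      using U V VU by (auto simp: unbordered_def not_ending_with_def not_starting_with_def)
    then show ?thesis using r VU by (auto simp: append_run_def)
  qed (use V in \<open>auto simp: unbordered_def not_starting_with_def\<close>)
next
  have "append_run a ` ({1..<m} \<times> unbordered m k a) \<subseteq> ending_with m k a"
    unfolding ending_with_eq_image[OF a] by (auto simp: unbordered_def not_ending_with_def)
  moreover have "hd (append_run a u) \<noteq> a" if "u \<in> {1..<m} \<times> unbordered m k a" for u
    using that by (auto simp: unbordered_def append_run_def)
  ultimately have "append_run a ` ({1..<m} \<times> unbordered m k a) \<subseteq> not_starting_with m k a"
    by (auto simp: ending_with_def not_starting_with_def)
  moreover have "insert [] (unbordered m k a) \<subseteq> not_starting_with m k a"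
    using Nil_in_avoiders[OF assms(1)] by (auto simp: not_starting_with_def unbordered_def)
  ultimately show "V \<in> not_starting_with m k a"
    if "V \<in> insert [] (unbordered m k a \<union> append_run a ` ({1..<m} \<times> unbordered m k a))" for V
    using that by blast
qed

lemma cyc_avoiders_eq_Un_starting:
  "cyc_avoiders m k = (\<Union>a\<in>{1..k}. {W \<in> cyc_avoiders m k. hd W = a})"
proof -
  have "hd W \<in> {1..k}" if "W \<in> cyc_avoiders m k" for W
    using that hd_in_set[of W] by (auto simp: cyc_avoiders_def simp del: hd_in_set)
  then show ?thesis by blast
qed

lemma inj_on_wrap_run: "inj_on (wrap_run a) (run_splits m \<times> unbordered m k a)"
proof (rule inj_onI)
  fix u u' assume u: "u \<in> run_splits m \<times> unbordered m k a"
    and u': "u' \<in> run_splits m \<times> unbordered m k a" and eq: "wrap_run a u = wrap_run a u'"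
  obtain s p V where u_eq: "u = ((s, p), V)" by (metis prod.collapse)
  obtain s' p' V' where u'_eq: "u' = ((s', p'), V')" by (metis prod.collapse)
  have V: "V \<noteq> []" "hd V \<noteq> a" "last V \<noteq> a" "p \<le> s"
    using u u_eq by (auto simp: run_splits_def unbordered_def)
  have V': "V' \<noteq> []" "hd V' \<noteq> a" "last V' \<noteq> a" "p' \<le> s'"
    using u' u'_eq by (auto simp: run_splits_def unbordered_def)
  have "replicate p a @ (V @ replicate (s - p) a) = replicate p' a @ (V' @ replicate (s' - p') a)"
    using eq u_eq u'_eq by (simp add: wrap_run_def)
  then have "p = p' \<and> V @ replicate (s - p) a = V' @ replicate (s' - p') a"
    by (rule leading_run_unique) (use V V' in auto)
  then have "p = p'" and tail: "V @ replicate (s - p) a = V' @ replicate (s' - p') a"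
    by auto
  moreover have "s - p = s' - p' \<and> V = V'"
    using trailing_run_unique[OF tail] V V' by auto
  ultimately show "u = u'" using u_eq u'_eq V V' by auto
qed

lemma cyc_avoider_starting_cases:
  assumes W: "W \<in> cyc_avoiders m k" "hd W = a"
  shows "W \<in> (\<lambda>l. replicate l a) ` {1..<m} \<union> wrap_run a ` (run_splits m \<times> unbordered m k a)"
proof -
  obtain p R where WR: "W = replicate p a @ R" and R: "R = [] \<or> hd R \<noteq> a"
    by (rule split_leading_run)
  have p: "p \<ge> 1" using W WR R by (cases p) (auto simp: cyc_avoiders_def)
  show ?thesis
  proof (cases "R = []")
    case True
    then show ?thesis using W WR p cyc_avoids_run_replicate[OF p, of m a]
      by (auto simp: cyc_avoiders_def)
  next
    case False
    obtain V q where RV: "R = V @ replicate q a" and V: "V = [] \<or> last V \<noteq> a"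
      by (rule split_trailing_run)
    have "V \<noteq> []" using False R RV by (cases q) auto
    then have hV: "hd V \<noteq> a" and lV: "last V \<noteq> a" using R RV False V by auto
    have "p + q < m \<and> \<not> contains_run m V"
      using W WR RV cyc_avoids_run_wrap[OF p \<open>V \<noteq> []\<close> hV lV, of m q]
      by (simp add: cyc_avoiders_def)
    moreover have "set V \<subseteq> {1..k}" using W WR RV by (auto simp: cyc_avoiders_def)
    ultimately have "((p + q, p), V) \<in> run_splits m \<times> unbordered m k a"
      using p \<open>V \<noteq> []\<close> hV lV by (simp add: run_splits_def unbordered_def avoiders_def)
    moreover have "W = wrap_run a ((p + q, p), V)" using WR RV by (simp add: wrap_run_def)
    ultimately show ?thesis by blast
  qed
qed

lemma wrap_run_in_cyc_avoiders:
  assumes a: "a \<in> {1..k}" and u: "u \<in> run_splits m \<times> unbordered m k a"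
  shows "wrap_run a u \<in> cyc_avoiders m k" and "hd (wrap_run a u) = a"
proof -
  obtain s p V where u_eq: "u = ((s, p), V)" by (metis prod.collapse)
  have "1 \<le> p" "p \<le> s" "s < m" "V \<noteq> []" "hd V \<noteq> a" "last V \<noteq> a"
    "set V \<subseteq> {1..k}" "\<not> contains_run m V"
    using u u_eq by (auto simp: run_splits_def unbordered_def avoiders_def)
  then show "wrap_run a u \<in> cyc_avoiders m k" "hd (wrap_run a u) = a"
    using u_eq a cyc_avoids_run_wrap[of p V a m "s - p"]
    by (cases p; auto simp: cyc_avoiders_def wrap_run_def)+
qed

lemma cyc_avoiders_starting_eq:
  assumes a: "a \<in> {1..k}"
  shows "{W \<in> cyc_avoiders m k. hd W = a}
           = (\<lambda>l. replicate l a) ` {1..<m} \<union> wrap_run a ` (run_splits m \<times> unbordered m k a)"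
proof (intro equalityI subsetI)
  fix W
  assume "W \<in> (\<lambda>l. replicate l a) ` {1..<m} \<union> wrap_run a ` (run_splits m \<times> unbordered m k a)"
  then show "W \<in> {W \<in> cyc_avoiders m k. hd W = a}"
  proof (elim UnE imageE)
    fix l assume "l \<in> {1..<m}" "W = replicate l a"
    then show ?thesis using a cyc_avoids_run_replicate[of l m a] by (auto simp: cyc_avoiders_def)
  qed (use wrap_run_in_cyc_avoiders[OF a] in blast)
qed (use cyc_avoider_starting_cases in blast)

section \<open>Weights and summability\<close>

lemma word_weight_Nil [simp]: "word_weight x [] = 1"
  by (simp add: word_weight_def)

lemma word_weight_append [simp]: "word_weight x (A @ B) = word_weight x A * word_weight x B"
  by (simp add: word_weight_def)

lemma word_weight_replicate [simp]: "word_weight x (replicate r a) = x a ^ r"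
  by (simp add: word_weight_def prod_list_replicate)

lemma word_weight_rev [simp]: "word_weight x (rev V) = word_weight x V"
  by (simp add: word_weight_def rev_map[symmetric] prod_list.rev)

lemma norm_word_weight: "norm (word_weight x W) = prod_list (map (\<lambda>i. norm (x i)) W)"
  by (induction W) (simp_all add: word_weight_def norm_mult)

lemma sum_prod_list_lists_length:
  fixes g :: "'a \<Rightarrow> 'b::comm_semiring_1"
  assumes "finite K"
  shows "(\<Sum>W | set W \<subseteq> K \<and> length W = n. prod_list (map g W)) = (\<Sum>a\<in>K. g a) ^ n"
proof (induction n)
  case 0
  have "{W. set W \<subseteq> K \<and> length W = 0} = {[]}" by auto
  then show ?case by simp
next
  case (Suc n)
  let ?Wn = "{W. set W \<subseteq> K \<and> length W = n}"
  have "(\<Sum>W | set W \<subseteq> K \<and> length W = Suc n. prod_list (map g W))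
      = (\<Sum>W\<in>(\<lambda>(xs, a). a # xs) ` (?Wn \<times> K). prod_list (map g W))"
    by (simp only: lists_length_Suc_eq)
  also have "\<dots> = (\<Sum>(xs, a)\<in>?Wn \<times> K. prod_list (map g xs) * g a)"
    by (subst sum.reindex[OF inj_split_Cons]) (simp add: split_def mult.commute)
  also have "\<dots> = (\<Sum>xs\<in>?Wn. prod_list (map g xs)) * (\<Sum>a\<in>K. g a)"
    by (simp add: sum.cartesian_product[symmetric] sum_product)
  finally show ?case using Suc by (simp add: mult.commute)
qed

text \<open>Grouping by length, the norms sum to at most the geometric series in
  \<open>\<Sum>i=1..k. norm (x i)\<close>.\<close>
lemma summable_on_words:
  assumes "(\<Sum>i=1..k. norm (x i)) < 1"
  shows "word_weight x summable_on {W. set W \<subseteq> {1..k}}"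
proof (rule abs_summable_summable, rule nonneg_bdd_above_summable_on)
  define s where "s = (\<Sum>i=1..k. norm (x i))"
  have s: "0 \<le> s" "s < 1" using assms by (simp_all add: s_def sum_nonneg)
  let ?g = "\<lambda>W. norm (word_weight x W)"
  show "bdd_above (sum ?g ` {F. F \<subseteq> {W. set W \<subseteq> {1..k}} \<and> finite F})"
  proof (rule bdd_aboveI, clarify)
    fix F assume F: "F \<subseteq> {W. set W \<subseteq> {1..k}}" "finite F"
    define N where "N = Max (insert 0 (length ` F))"
    define G where "G = {W. set W \<subseteq> {1..k} \<and> length W \<le> N}"
    have "F \<subseteq> G" using F by (auto simp: G_def N_def)
    moreover have "finite G" unfolding G_def by (rule finite_lists_length_le) simp
    ultimately have "sum ?g F \<le> sum ?g G" by (intro sum_mono2) simp_all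
    also have "G = (\<Union>n\<le>N. {W. set W \<subseteq> {1..k} \<and> length W = n})" by (auto simp: G_def)
    also have "sum ?g \<dots> = (\<Sum>n\<le>N. \<Sum>W | set W \<subseteq> {1..k} \<and> length W = n. ?g W)"
      by (rule sum.UNION_disjoint) (auto intro: finite_lists_length_eq)
    also have "\<dots> = (\<Sum>n\<le>N. s ^ n)"
      by (simp add: norm_word_weight sum_prod_list_lists_length s_def)
    also have "\<dots> = (\<Sum>n<Suc N. s ^ n)" by (simp add: lessThan_Suc_atMost)
    also have "\<dots> = (1 - s ^ Suc N) / (1 - s)" by (simp only: sum_gp_strict) (use s in simp)
    also have "\<dots> \<le> 1 / (1 - s)" using s by (simp add: divide_right_mono)
    finally show "sum ?g F \<le> 1 / (1 - s)" .
  qed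
qed simp

lemma has_sum_image_Times:
  fixes w :: "'b \<Rightarrow> 'c::real_normed_algebra"
  assumes inj: "inj_on h (R \<times> B)" and fin: "finite R"
    and weight: "\<And>r V. r \<in> R \<Longrightarrow> V \<in> B \<Longrightarrow> w (h (r, V)) = c r * w V"
    and summable: "w summable_on h ` (R \<times> B)" and has_sum: "(w has_sum S) B"
  shows "(w has_sum ((\<Sum>r\<in>R. c r) * S)) (h ` (R \<times> B))"
proof -
  have "((w \<circ> h) has_sum ((\<Sum>r\<in>R. c r) * S)) (Sigma R (\<lambda>_. B))"
  proof (rule has_sum_SigmaI)
    show "((\<lambda>V. (w \<circ> h) (r, V)) has_sum (c r * S)) B" if "r \<in> R" for r
      using has_sum_cmult_right[OF has_sum, of "c r"]
      by (rule has_sum_cong[THEN iffD1, rotated]) (simp add: weight that)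
    show "((\<lambda>r. c r * S) has_sum ((\<Sum>r\<in>R. c r) * S)) R"
      using has_sum_finiteI[OF fin sum_distrib_right[of c R S]] by simp
    show "(w \<circ> h) summable_on Sigma R (\<lambda>_. B)"
      using summable summable_on_reindex[OF inj, of w] by simp
  qed
  then show ?thesis using has_sum_reindex[OF inj, of w] by simp
qed

section \<open>Solving the generating-function equations\<close>

definition short_runs :: "nat \<Rightarrow> 'a::comm_semiring_1 \<Rightarrow> 'a" where
  "short_runs m X = (\<Sum>r\<in>{1..<m}. X ^ r)"

definition short_runs_weighted :: "nat \<Rightarrow> 'a::comm_semiring_1 \<Rightarrow> 'a" where
  "short_runs_weighted m X = (\<Sum>s\<in>{1..<m}. of_nat s * X ^ s)"

lemma short_runs_closed:
  fixes X :: "'a::comm_ring_1"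
  assumes "m \<ge> 1"
  shows "(X - 1) * short_runs m X = X ^ m - X"
  using assms
proof (induction m)
  case (Suc m)
  show ?case
  proof (cases "m = 0")
    case False
    then have "short_runs (Suc m) X = short_runs m X + X ^ m"
      by (simp add: short_runs_def)
    with Suc False show ?thesis by (simp add: algebra_simps)
  qed (simp add: short_runs_def)
qed simp

lemma short_runs_weighted_closed:
  fixes X :: "'a::comm_ring_1"
  shows "(X - 1)^2 * short_runs_weighted m X = (of_nat m - 1) * X ^ (m + 1) - of_nat m * X ^ m + X"
proof (induction m)
  case (Suc m)
  show ?case
  proof (cases "m = 0")
    case False
    then have "short_runs_weighted (Suc m) X = short_runs_weighted m X + of_nat m * X ^ m"
      by (simp add: short_runs_weighted_def)
    with Suc show ?thesis by (simp add: algebra_simps power2_eq_square)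
  qed (simp add: short_runs_weighted_def)
qed (simp add: short_runs_weighted_def)

text \<open>The generating-function equations for linear avoiders, with \<open>L\<close> all of them, \<open>P a\<close>
  those ending with \<open>a\<close> and \<open>M a\<close> those neither starting nor ending with \<open>a\<close>.\<close>
lemma avoider_system_solution:
  fixes L :: "'a::field" and P M y :: "nat \<Rightarrow> 'a"
  assumes L: "L = 1 + (\<Sum>a\<in>A. P a)"
    and P: "\<And>a. a \<in> A \<Longrightarrow> P a = y a * (L - P a)"
    and M: "\<And>a. a \<in> A \<Longrightarrow> L - P a = 1 + (1 + y a) * M a"
    and y: "\<And>a. a \<in> A \<Longrightarrow> 1 + y a \<noteq> 0"
  defines "D \<equiv> 1 - (\<Sum>a\<in>A. y a / (1 + y a))"
  shows "D \<noteq> 0" and "\<And>a. a \<in> A \<Longrightarrow> M a = 1 / ((1 + y a)^2 * D) - 1 / (1 + y a)"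
proof -
  have P': "P a = y a / (1 + y a) * L" if "a \<in> A" for a
  proof -
    have "P a * (1 + y a) = y a * L" using P[OF that] by (simp add: algebra_simps)
    then show ?thesis using y[OF that] by (simp add: field_simps)
  qed
  then have "(\<Sum>a\<in>A. P a) = (\<Sum>a\<in>A. y a / (1 + y a)) * L"
    by (simp add: sum_distrib_right)
  then have "L = 1 + (\<Sum>a\<in>A. y a / (1 + y a)) * L"
    using L by simp
  then have LD: "L * D = 1" by (simp add: D_def algebra_simps)
  then show "D \<noteq> 0" by auto
  fix a assume a: "a \<in> A"
  have "M a * (1 + y a) = L / (1 + y a) - 1"
    using M[OF a] P'[OF a] y[OF a] by (simp add: field_simps)
  then have "M a = (L / (1 + y a) - 1) / (1 + y a)"
    using y[OF a] by (simp add: eq_divide_eq)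
  also have "\<dots> = L / (1 + y a) / (1 + y a) - 1 / (1 + y a)"
    by (rule diff_divide_distrib)
  also have "L = 1 / D" using LD \<open>D \<noteq> 0\<close> by (simp add: field_simps)
  finally show "M a = 1 / ((1 + y a)^2 * D) - 1 / (1 + y a)"
    by (simp add: power2_eq_square mult.commute)
qed

lemma short_runs_ratio:
  fixes X :: "'a::field"
  assumes "m \<ge> 1" "X \<noteq> 1"
  shows "1 + short_runs m X = (X ^ m - 1) / (X - 1)"
    and "short_runs m X / (1 + short_runs m X) = (X ^ m - X) / (X ^ m - 1)"
proof -
  have y: "short_runs m X = (X ^ m - X) / (X - 1)"
    using short_runs_closed[OF assms(1), of X] assms(2) by (simp add: field_simps)
  then show "1 + short_runs m X = (X ^ m - 1) / (X - 1)"
    using assms(2) by (simp add: field_simps)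
  with y show "short_runs m X / (1 + short_runs m X) = (X ^ m - X) / (X ^ m - 1)"
    using assms(2) by simp
qed

text \<open>The contribution of the cyclic avoiders starting with a letter of weight \<open>X\<close>.\<close>
lemma cyclic_contribution_closed:
  fixes X D :: "'a::field"
  assumes m: "m \<ge> 1" and X: "X \<noteq> 1" "X ^ m \<noteq> 1" and D: "D \<noteq> 0"
  defines "y \<equiv> short_runs m X"
  shows "y + short_runs_weighted m X * (1 / ((1 + y)^2 * D) - 1 / (1 + y)) =
    (X ^ (2*m) - of_nat m * X ^ (m+1) + (of_nat m - 1) * X ^ m) / ((X ^ m - 1) * (X - 1))
    + ((of_nat m - 1) * X ^ (m+1) - of_nat m * X ^ m + X) / (X ^ m - 1)^2 / D"
proof -
  define Z where "Z = X ^ m"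
  define N where "N = (of_nat m - 1) * (Z * X) - of_nat m * Z + X"
  have X1: "X - 1 \<noteq> 0" and Z1: "Z - 1 \<noteq> 0" using X by (simp_all add: Z_def)
  have y: "y = (Z - X) / (X - 1)" and y1: "1 + y = (Z - 1) / (X - 1)"
    using short_runs_closed[OF m, of X] X1 short_runs_ratio(1)[OF m X(1)]
    by (simp_all add: y_def Z_def field_simps)
  have c: "short_runs_weighted m X = N / (X - 1)^2"
    using short_runs_weighted_closed[of X m] X1 by (simp add: N_def Z_def field_simps)
  have s1: "N / (X - 1)^2 * (1 / ((1 + y)^2 * D)) = N / (Z - 1)^2 / D"
    unfolding y1 using X1 Z1 D by (simp add: field_simps)
  have s2: "N / (X - 1)^2 * (1 / (1 + y)) = N / ((X - 1) * (Z - 1))"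
    unfolding y1 using X1 Z1 by (simp add: divide_simps power2_eq_square)
  have num: "(Z - X) * (Z - 1) - N = Z * Z - of_nat m * (Z * X) + (of_nat m - 1) * Z"
    unfolding N_def by (simp add: algebra_simps)
  have expand: "(Z - X) / (X - 1) = (Z - X) * (Z - 1) / ((X - 1) * (Z - 1))" using Z1 by simp
  have s3: "y - N / ((X - 1) * (Z - 1))
      = (Z * Z - of_nat m * (Z * X) + (of_nat m - 1) * Z) / ((Z - 1) * (X - 1))"
    unfolding y expand diff_divide_distrib[symmetric] num by (simp add: mult.commute)
  have e1: "X ^ (2*m) = Z * Z" and e2: "X ^ (m+1) = Z * X"
    by (simp_all add: Z_def power_mult power2_eq_square mult.commute)
  have "y + short_runs_weighted m X * (1 / ((1 + y)^2 * D) - 1 / (1 + y))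
      = (y - N / (X - 1)^2 * (1 / (1 + y))) + N / (X - 1)^2 * (1 / ((1 + y)^2 * D))"
    unfolding c by (simp add: algebra_simps)
  also have "\<dots> = (Z * Z - of_nat m * (Z * X) + (of_nat m - 1) * Z) / ((Z - 1) * (X - 1))
      + N / (Z - 1)^2 / D"
    unfolding s1 s2 s3 ..
  finally show ?thesis unfolding e1 e2 Z_def[symmetric] N_def .
qed

section \<open>Generating functions of avoiders\<close>

locale letter_weights =
  fixes m k :: nat and x :: "nat \<Rightarrow> complex"
  assumes m_pos: "m \<ge> 1" and norm_sum_less_1: "(\<Sum>i=1..k. norm (x i)) < 1"
begin

abbreviation w :: "nat list \<Rightarrow> complex" where
  "w \<equiv> word_weight x"

lemma summable_on_avoiders:
  assumes "E \<subseteq> avoiders m k" shows "w summable_on E"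
  using summable_on_words[OF norm_sum_less_1]
  by (rule summable_on_subset_banach) (use assms in \<open>auto simp: avoiders_def\<close>)

lemma summable_on_cyc_avoiders:
  assumes "E \<subseteq> cyc_avoiders m k" shows "w summable_on E"
  using summable_on_words[OF norm_sum_less_1]
  by (rule summable_on_subset_banach) (use assms in \<open>auto simp: cyc_avoiders_def\<close>)

definition L :: complex where "L = infsum w (avoiders m k)"
definition P :: "nat \<Rightarrow> complex" where "P a = infsum w (ending_with m k a)"
definition M :: "nat \<Rightarrow> complex" where "M a = infsum w (unbordered m k a)"

lemma has_sum_L: "(w has_sum L) (avoiders m k)"
  unfolding L_def by (rule has_sum_infsum, rule summable_on_avoiders) simp

lemma has_sum_P: "(w has_sum P a) (ending_with m k a)"
  unfolding P_def by (rule has_sum_infsum, rule summable_on_avoiders) (auto simp: ending_with_def)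

lemma has_sum_M: "(w has_sum M a) (unbordered m k a)"
  unfolding M_def by (rule has_sum_infsum, rule summable_on_avoiders) (auto simp: unbordered_def)

lemma has_sum_not_ending_with: "(w has_sum (L - P a)) (not_ending_with m k a)"
proof -
  have N: "(w has_sum infsum w (not_ending_with m k a)) (not_ending_with m k a)"
    by (rule has_sum_infsum, rule summable_on_avoiders) (auto simp: not_ending_with_def)
  have "(w has_sum (infsum w (not_ending_with m k a) + P a))
      (not_ending_with m k a \<union> ending_with m k a)"
    by (rule has_sum_Un_disjoint[OF N has_sum_P]) (auto simp: not_ending_with_def ending_with_def)
  moreover have "not_ending_with m k a \<union> ending_with m k a = avoiders m k"
    by (auto simp: not_ending_with_def ending_with_def)
  ultimately have "infsum w (not_ending_with m k a) = L - P a"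
    using has_sum_unique[OF _ has_sum_L] by (simp add: eq_diff_eq)
  then show ?thesis using N by simp
qed

lemma L_eq: "L = 1 + (\<Sum>a\<in>{1..k}. P a)"
proof -
  have "(w has_sum (\<Sum>a\<in>{1..k}. P a)) (\<Union>a\<in>{1..k}. ending_with m k a)"
    by (rule sum_has_sum[OF _ has_sum_P]) (auto simp: ending_with_def)
  moreover have "[] \<notin> (\<Union>a\<in>{1..k}. ending_with m k a)" by (auto simp: ending_with_def)
  ultimately have "(w has_sum (w [] + (\<Sum>a\<in>{1..k}. P a))) (avoiders m k)"
    unfolding avoiders_eq_Un_ending_with[OF m_pos] by (rule has_sum_insert[rotated])
  then show ?thesis using has_sum_unique[OF has_sum_L] by simp
qed

text \<open>Strip the final run of \<open>a\<close>, whose length is between \<open>1\<close> and \<open>m - 1\<close>.\<close>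
lemma P_eq:
  assumes a: "a \<in> {1..k}"
  shows "P a = short_runs m (x a) * (L - P a)"
proof -
  have "(w has_sum ((\<Sum>r\<in>{1..<m}. x a ^ r) * (L - P a)))
      (append_run a ` ({1..<m} \<times> not_ending_with m k a))"
  proof (rule has_sum_image_Times[OF inj_on_append_run])
    show "w summable_on append_run a ` ({1..<m} \<times> not_ending_with m k a)"
      unfolding ending_with_eq_image[OF a, symmetric]
      by (rule summable_on_avoiders) (auto simp: ending_with_def)
    show "w (append_run a (r, V)) = x a ^ r * w V" for r V
      by (simp add: append_run_def mult.commute)
  qed (simp_all add: has_sum_not_ending_with)
  moreover have "(w has_sum P a) (append_run a ` ({1..<m} \<times> not_ending_with m k a))"
    using has_sum_P[of a] unfolding ending_with_eq_image[OF a] .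
  ultimately show ?thesis unfolding short_runs_def by (rule has_sum_unique[symmetric])
qed

text \<open>Reversal maps words not ending with \<open>a\<close> onto words not starting with \<open>a\<close>; these are
  empty, unbordered, or unbordered followed by a run of \<open>a\<close>.\<close>
lemma L_minus_P_eq:
  assumes a: "a \<in> {1..k}"
  shows "L - P a = 1 + (1 + short_runs m (x a)) * M a"
proof -
  let ?E = "append_run a ` ({1..<m} \<times> unbordered m k a)"
  have "(w has_sum (L - P a)) (not_starting_with m k a)"
    using has_sum_not_ending_with has_sum_reindex_bij_betw[OF bij_betw_rev_not_ending_with, of w]
    by simp
  have E: "(w has_sum ((\<Sum>r\<in>{1..<m}. x a ^ r) * M a)) ?E"
  proof (rule has_sum_image_Times)
    have "unbordered m k a \<subseteq> not_ending_with m k a"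
      by (auto simp: unbordered_def not_ending_with_def)
    then show "inj_on (append_run a) ({1..<m} \<times> unbordered m k a)"
      by (intro inj_on_subset[OF inj_on_append_run]) blast
    have "?E \<subseteq> ending_with m k a"
      unfolding ending_with_eq_image[OF a] using \<open>unbordered m k a \<subseteq> _\<close> by blast
    then show "w summable_on ?E"
      by (rule summable_on_avoiders[OF order_trans]) (auto simp: ending_with_def)
    show "w (append_run a (r, V)) = x a ^ r * w V" for r V
      by (simp add: append_run_def mult.commute)
  qed (simp_all add: has_sum_M)
  have "(w has_sum (M a + (\<Sum>r\<in>{1..<m}. x a ^ r) * M a)) (unbordered m k a \<union> ?E)"
    by (rule has_sum_Un_disjoint[OF has_sum_M E]) (auto simp: unbordered_def append_run_def)
  then have "(w has_sum (w [] + (M a + (\<Sum>r\<in>{1..<m}. x a ^ r) * M a)))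
      (insert [] (unbordered m k a \<union> ?E))"
    by (rule has_sum_insert[rotated]) (auto simp: unbordered_def append_run_def)
  then have "(w has_sum (1 + (1 + short_runs m (x a)) * M a)) (not_starting_with m k a)"
    unfolding not_starting_with_eq[OF m_pos a] by (simp add: short_runs_def algebra_simps)
  with \<open>(w has_sum (L - P a)) (not_starting_with m k a)\<close> show ?thesis
    by (rule has_sum_unique)
qed

text \<open>A cyclic avoider starting with \<open>a\<close> is a constant word \<open>a\<^sup>l\<close>, or \<open>a\<^sup>p V a\<^sup>s\<^sup>-\<^sup>p\<close> with
  \<open>V\<close> unbordered, which contributes \<open>x a ^ s\<close> times the weight of \<open>V\<close> for each of \<open>s\<close> values of \<open>p\<close>.\<close>
lemma has_sum_cyc_avoiders_starting:
  assumes a: "a \<in> {1..k}"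
  shows "(w has_sum (short_runs m (x a) + short_runs_weighted m (x a) * M a))
           {W \<in> cyc_avoiders m k. hd W = a}"
proof -
  let ?C = "(\<lambda>l. replicate l a) ` {1..<m}" and ?E = "wrap_run a ` (run_splits m \<times> unbordered m k a)"
  have C: "(w has_sum short_runs m (x a)) ?C"
    by (rule has_sum_finiteI) (simp_all add: sum.reindex inj_on_def short_runs_def)
  have "(\<Sum>sp\<in>run_splits m. x a ^ fst sp) = (\<Sum>s\<in>{1..<m}. \<Sum>p\<in>{1..s}. x a ^ s)"
    unfolding run_splits_def by (subst sum.Sigma) (simp_all add: split_def)
  also have "\<dots> = short_runs_weighted m (x a)"
    unfolding short_runs_weighted_def by (rule sum.cong) simp_all
  finally have weighted: "(\<Sum>sp\<in>run_splits m. x a ^ fst sp) = short_runs_weighted m (x a)" .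
  have E: "(w has_sum ((\<Sum>sp\<in>run_splits m. x a ^ fst sp) * M a)) ?E"
  proof (rule has_sum_image_Times[OF inj_on_wrap_run])
    show "w summable_on ?E"
      by (rule summable_on_cyc_avoiders) (use cyc_avoiders_starting_eq[OF a] in blast)
    show "w (wrap_run a (sp, V)) = x a ^ fst sp * w V" if "sp \<in> run_splits m" for sp V
      using that by (auto simp: run_splits_def wrap_run_def power_add[symmetric])
  qed (simp_all add: run_splits_def has_sum_M)
  have "?C \<inter> ?E = {}"
  proof -
    have "hd V \<in> set (wrap_run a u)" "hd V \<noteq> a"
      if "u \<in> run_splits m \<times> unbordered m k a" "V = snd u" for u V
      using that by (auto simp: wrap_run_def unbordered_def split_def)
    then have "\<not> set W \<subseteq> {a}" if "W \<in> ?E" for W using that by fastforce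
    moreover have "set W \<subseteq> {a}" if "W \<in> ?C" for W using that by auto
    ultimately show ?thesis by blast
  qed
  from has_sum_Un_disjoint[OF C E this] show ?thesis
    by (simp add: cyc_avoiders_starting_eq[OF a] weighted)
qed

lemma has_sum_cyc_avoiders:
  "(w has_sum (\<Sum>a\<in>{1..k}. short_runs m (x a) + short_runs_weighted m (x a) * M a))
     (cyc_avoiders m k)"
proof -
  have "(w has_sum (\<Sum>a\<in>{1..k}. short_runs m (x a) + short_runs_weighted m (x a) * M a))
      (\<Union>a\<in>{1..k}. {W \<in> cyc_avoiders m k. hd W = a})"
    by (rule sum_has_sum[OF _ has_sum_cyc_avoiders_starting]) auto
  then show ?thesis unfolding cyc_avoiders_eq_Un_starting[symmetric] .
qed

lemma norm_x_less_1: "a \<in> {1..k} \<Longrightarrow> norm (x a) < 1"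
  using member_le_sum[of a "{1..k}" "\<lambda>i. norm (x i)"] norm_sum_less_1 by simp

lemma x_neq_1: "a \<in> {1..k} \<Longrightarrow> x a \<noteq> 1"
  using norm_x_less_1 by force

lemma x_power_neq_1:
  assumes "a \<in> {1..k}" shows "x a ^ m \<noteq> 1"
proof
  assume "x a ^ m = 1"
  then have "norm (x a) ^ m = 1" by (metis norm_one norm_power)
  moreover have "norm (x a) ^ m < 1"
    using norm_x_less_1[OF assms] m_pos by (simp add: power_less_one_iff)
  ultimately show False by simp
qed

definition D :: complex where
  "D = 1 - (\<Sum>a\<in>{1..k}. short_runs m (x a) / (1 + short_runs m (x a)))"

lemma short_runs_plus_1_nonzero: "a \<in> {1..k} \<Longrightarrow> 1 + short_runs m (x a) \<noteq> 0"
  using short_runs_ratio(1)[OF m_pos x_neq_1] x_neq_1 x_power_neq_1 by simp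

lemma D_nonzero: "D \<noteq> 0"
  unfolding D_def using L_eq P_eq L_minus_P_eq short_runs_plus_1_nonzero
  by (rule avoider_system_solution(1))

lemma M_closed:
  "a \<in> {1..k} \<Longrightarrow> M a = 1 / ((1 + short_runs m (x a))^2 * D) - 1 / (1 + short_runs m (x a))"
  unfolding D_def using L_eq P_eq L_minus_P_eq short_runs_plus_1_nonzero
  by (rule avoider_system_solution(2))

lemma D_closed: "D = 1 - (\<Sum>i=1..k. (x i ^ m - x i) / (x i ^ m - 1))"
  unfolding D_def using short_runs_ratio(2)[OF m_pos x_neq_1] by simp

end

theorem corollary5p3:
  fixes m k :: nat and x :: "nat \<Rightarrow> complex"
  assumes "m \<ge> 1" and "k \<ge> 1"
    and "(\<Sum>i=1..k. norm (x i)) < 1"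
  shows "(word_weight x has_sum
           ((\<Sum>i=1..k. (x i ^ (2*m) - of_nat m * x i ^ (m+1) + (of_nat m - 1) * x i ^ m)
                        / ((x i ^ m - 1) * (x i - 1)))
            + (\<Sum>i=1..k. ((of_nat m - 1) * x i ^ (m+1) - of_nat m * x i ^ m + x i) / (x i ^ m - 1)^2)
              / (1 - (\<Sum>i=1..k. (x i ^ m - x i) / (x i ^ m - 1)))))
         {W. W \<noteq> [] \<and> set W \<subseteq> {1..k} \<and> cyc_avoids_run m W}"
proof -
  interpret letter_weights m k x
    using assms(1,3) by unfold_locales
  have "short_runs m (x a) + short_runs_weighted m (x a) * M a =
    (x a ^ (2*m) - of_nat m * x a ^ (m+1) + (of_nat m - 1) * x a ^ m) / ((x a ^ m - 1) * (x a - 1))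
    + ((of_nat m - 1) * x a ^ (m+1) - of_nat m * x a ^ m + x a) / (x a ^ m - 1)^2 / D"
    if "a \<in> {1..k}" for a
    unfolding M_closed[OF that]
    by (rule cyclic_contribution_closed[OF m_pos x_neq_1[OF that] x_power_neq_1[OF that] D_nonzero])
  then show ?thesis
    using has_sum_cyc_avoiders
    by (simp add: sum.distrib sum_divide_distrib cyc_avoiders_def D_closed)
qed

end
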